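(* For any positive integers $n$ and $m\ge 2$ and any $\sigma_1^2,\dots,\sigma_n^2>0$, $\mathrm{Ent}(\sigma^2_{G^{r}})\le 8\ln(m)$.
   Context: For a vector $a=(a_i)_{i\in S}$ with nonnegative entries and positive sum, $\mathrm{Ent}(a)=-\sum_i\hat a_i\ln\hat a_i$ with $\hat a_i=a_i/\sum_j a_j$. For $S\subset[n]$, $\sigma^2_S=(\sigma_i^2)_{i\in S}$. Let $\underline\sigma^2=\min_i\sigma_i^2$ and for $j=1,\dots,k$ (covering $[n]$) let $G_j=\{i\in[n]:2^{j-1}\le\sigma_i^2/\underline\sigma^2<2^j\}$. For each $j$ with $|G_j|\le 2m$ set $G'_j=G_j$; for each $j$ with $|G_j|>2m$ choose $G'_j\subset G_j$ with $|G'_j|=2m$; $G^{r}=\bigcup_jG'_j$, where the choices of the $G'_j$ are made so that $\mathrm{Ent}(\sigma^2_{G^{r}})$ is maximized. *)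

theory Defs
  imports Complex_Main
begin

definition Ent :: "(nat \<Rightarrow> real) \<Rightarrow> nat set \<Rightarrow> real" where
  "Ent a S = - (\<Sum>i\<in>S. (a i / sum a S) * ln (a i / sum a S))"

text \<open>s i plays the role of sigma_i^2, indices range over {1..n}.\<close>
definition smin :: "(nat \<Rightarrow> real) \<Rightarrow> nat \<Rightarrow> real" where
  "smin s n = Min (s ` {1..n})"

definition grp :: "(nat \<Rightarrow> real) \<Rightarrow> nat \<Rightarrow> nat \<Rightarrow> nat set" where
  "grp s n j = {i \<in> {1..n}. (2::real) ^ (j - 1) \<le> s i / smin s n \<and> s i / smin s n < 2 ^ j}"

definition admissible_choice :: "(nat \<Rightarrow> real) \<Rightarrow> nat \<Rightarrow> nat \<Rightarrow> (nat \<Rightarrow> nat set) \<Rightarrow> bool" where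
  "admissible_choice s n m Gp \<longleftrightarrow>
     (\<forall>j\<ge>1. (card (grp s n j) \<le> 2 * m \<longrightarrow> Gp j = grp s n j) \<and>
             (card (grp s n j) > 2 * m \<longrightarrow> Gp j \<subseteq> grp s n j \<and> card (Gp j) = 2 * m))"

definition reduced_sets :: "(nat \<Rightarrow> real) \<Rightarrow> nat \<Rightarrow> nat \<Rightarrow> nat set set" where
  "reduced_sets s n m = {(\<Union>j\<in>{1..}. Gp j) | Gp. admissible_choice s n m Gp}"

end

theory Submission
  imports Defs
begin

text \<open>The Shannon entropy is at most the Renyi entropy of order 1/3, \<open>(3/2) ln V\<close> with
  \<open>V = \<Sum>\<^sub>i p\<^sub>i powr (1/3)\<close> over the normalized weights \<open>p\<^sub>i\<close>. If the largest weight lies in the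
  dyadic group \<open>G\<^sub>J\<close>, every element of \<open>G\<^sub>j\<close> has \<open>p\<^sub>i \<le> 2 powr (j + 1 - J)\<close>, and the reduction keeps
  at most \<open>2m\<close> elements of each group. Hence \<open>V\<close> is at most \<open>2m\<close> times a geometric series with
  ratio \<open>2 powr (1/3)\<close>, so \<open>V \<le> 16m\<close> and \<open>Ent \<le> (3/2) ln (16m) \<le> 8 ln m\<close>.\<close>

lemma gibbs_inequality:
  fixes p q :: "'a \<Rightarrow> real"
  assumes "finite A" and "\<forall>i\<in>A. p i > 0 \<and> q i > 0" and "sum q A \<le> sum p A"
  shows "(\<Sum>i\<in>A. p i * ln (q i / p i)) \<le> 0"
proof -
  have "p i * ln (q i / p i) \<le> q i - p i" if "i \<in> A" for i
  proof -
    have pq: "p i > 0" "q i > 0" using assms(2) that by auto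
    have "p i * ln (q i / p i) \<le> p i * (q i / p i - 1)"
      using pq by (intro mult_left_mono ln_le_minus_one) auto
    also have "\<dots> = q i - p i" using pq by (simp add: field_simps)
    finally show ?thesis .
  qed
  then have "(\<Sum>i\<in>A. p i * ln (q i / p i)) \<le> (\<Sum>i\<in>A. q i - p i)"
    by (rule sum_mono)
  also have "\<dots> \<le> 0" using assms(3) by (simp add: sum_subtractf)
  finally show ?thesis .
qed

lemma cube_root_two_bound: "(2 powr (1/3) :: real) ^ 2 / (2 powr (1/3) - 1) \<le> 8"
proof -
  define x :: real where "x = 2 powr (1/3)"
  have x3: "x ^ 3 = 2" by (simp add: x_def powr_power)
  have x1: "x > 1" by (simp add: x_def)
  have "x \<ge> 5/4"
  proof (rule ccontr)
    assume "\<not> x \<ge> 5/4"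
    then have "x ^ 3 < (5/4) ^ 3" using x1 by (intro power_strict_mono) auto
    then show False using x3 by (simp add: power_divide)
  qed
  moreover have "x ^ 2 \<le> x ^ 3" using x1 by (intro power_increasing) auto
  ultimately have "x ^ 2 \<le> 8 * (x - 1)" using x3 by (simp add: algebra_simps)
  then show ?thesis using x1 by (simp add: x_def[symmetric] divide_le_eq)
qed

lemma entropy_le_Renyi:
  fixes s :: "nat \<Rightarrow> real" and a :: real
  assumes "finite R" and "R \<noteq> {}" and "\<forall>i\<in>R. s i > 0"
  shows "(1 - a) * Ent s R \<le> ln (\<Sum>i\<in>R. (s i / sum s R) powr a)"
proof -
  define p where "p i = s i / sum s R" for i
  have "sum s R > 0" using assms by (simp add: sum_pos)
  then have p_pos: "\<forall>i\<in>R. p i > 0" and p_sum: "sum p R = 1"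
    using assms(3) by (simp_all add: p_def sum_divide_distrib[symmetric])
  define V where "V = (\<Sum>i\<in>R. p i powr a)"
  have V_pos: "V > 0" unfolding V_def using assms(1,2) p_pos by (intro sum_pos) auto
  define q where "q i = p i powr a / V" for i
  have "sum q R = 1" using V_pos by (simp add: q_def V_def sum_divide_distrib[symmetric])
  then have "(\<Sum>i\<in>R. p i * ln (q i / p i)) \<le> 0"
    using assms(1) p_pos p_sum V_pos by (intro gibbs_inequality) (auto simp: q_def)
  also have "(\<Sum>i\<in>R. p i * ln (q i / p i)) = (\<Sum>i\<in>R. (1 - a) * - (p i * ln (p i)) - p i * ln V)"
    using p_pos V_pos by (intro sum.cong refl) (simp add: q_def ln_div ln_mult algebra_simps)
  also have "\<dots> = (1 - a) * Ent s R - ln V"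
    using p_sum by (simp add: Ent_def p_def[symmetric] sum_subtractf sum_negf sum_distrib_left
        sum_distrib_right[symmetric])
  finally show ?thesis by (simp add: V_def p_def)
qed

lemma sum_le_geometric_levels:
  fixes f :: "'a \<Rightarrow> real" and lv :: "'a \<Rightarrow> nat" and x :: real
  assumes "finite R" and "x > 1"
    and bound: "\<forall>i\<in>R. lv i \<le> J \<and> f i \<le> x ^ (lv i + 1) / x ^ J"
    and card_level: "\<forall>j. card {i\<in>R. lv i = j} \<le> k"
  shows "(\<Sum>i\<in>R. f i) \<le> k * (x ^ 2 / (x - 1))"
proof -
  have "(\<Sum>i\<in>R. f i) = (\<Sum>j<Suc J. \<Sum>i\<in>{i\<in>R. lv i = j}. f i)"
    using assms(1) bound by (intro sum.group[symmetric]) (auto simp: less_Suc_eq_le)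
  also have "\<dots> \<le> (\<Sum>j<Suc J. k * (x ^ (j + 1) / x ^ J))"
  proof (intro sum_mono)
    fix j
    have "(\<Sum>i\<in>{i\<in>R. lv i = j}. f i) \<le> card {i\<in>R. lv i = j} * (x ^ (j + 1) / x ^ J)"
      using bound by (intro sum_bounded_above) auto
    also have "\<dots> \<le> k * (x ^ (j + 1) / x ^ J)"
      using card_level assms(2) by (intro mult_right_mono) auto
    finally show "(\<Sum>i\<in>{i\<in>R. lv i = j}. f i) \<le> k * (x ^ (j + 1) / x ^ J)" .
  qed
  also have "\<dots> = k * x / x ^ J * (\<Sum>j<Suc J. x ^ j)"
    using assms(2) by (simp add: sum_distrib_left field_simps)
  also have "\<dots> = k * x / x ^ J * ((x ^ Suc J - 1) / (x - 1))"
    using assms(2) by (subst geometric_sum) auto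
  also have "\<dots> \<le> k * x / x ^ J * (x ^ Suc J / (x - 1))"
    using assms(2) by (intro mult_left_mono divide_right_mono) auto
  also have "\<dots> = k * (x ^ 2 / (x - 1))"
    using assms(2) by (simp add: field_simps power2_eq_square)
  finally show ?thesis .
qed

lemma sum_cube_root_shares_le_dyadic:
  fixes s :: "nat \<Rightarrow> real" and lv :: "nat \<Rightarrow> nat"
  assumes "finite R" and "R \<noteq> {}" and "r > 0"
    and level: "\<forall>i\<in>R. 2 ^ (lv i - 1) * r \<le> s i \<and> s i < 2 ^ lv i * r"
    and card_level: "\<forall>j. card {i\<in>R. lv i = j} \<le> k"
  shows "(\<Sum>i\<in>R. (s i / sum s R) powr (1/3)) \<le> 8 * real k"
proof -
  define x :: real where "x = 2 powr (1/3)"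
  have pow_x: "(2 ^ n) powr (1/3) = x ^ n" for n
  proof -
    have "(2::real) ^ n = 2 powr real n" by (simp add: powr_realpow)
    then show ?thesis by (simp add: x_def powr_powr powr_power)
  qed
  have "Max (s ` R) \<in> s ` R" using assms(1,2) by (intro Max_in) auto
  then obtain i0 where "i0 \<in> R" "s i0 = Max (s ` R)" by auto
  then have i0: "i0 \<in> R" "\<forall>i\<in>R. s i \<le> s i0" using assms(1) by auto
  define J where "J = lv i0"
  have s_pos: "\<forall>i\<in>R. s i > 0"
    using level assms(3) by (smt (verit) mult_pos_pos zero_less_power)
  have "J \<noteq> 0"
  proof
    assume "J = 0"
    then have "r \<le> s i0" "s i0 < r" using level i0(1) by (auto simp: J_def)
    then show False by simp
  qed
  have "s i0 \<le> sum s R" using assms(1) i0(1) s_pos by (intro member_le_sum) auto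
  have "sum s R > 0" using assms(1,2) s_pos by (intro sum_pos) auto
  have "lv i \<le> J \<and> (s i / sum s R) powr (1/3) \<le> x ^ (lv i + 1) / x ^ J" if "i \<in> R" for i
  proof
    have "(2::real) ^ (lv i - 1) * r < 2 ^ J * r"
      using level that i0 unfolding J_def by (meson order.trans order.strict_trans1)
    then show "lv i \<le> J" using assms(3) by (simp add: power_strict_increasing_iff)
    have "s i / sum s R \<le> s i / s i0"
      using that s_pos i0 \<open>s i0 \<le> sum s R\<close> by (intro divide_left_mono) auto
    also have "\<dots> \<le> 2 ^ lv i * r / (2 ^ (J - 1) * r)"
      using level that i0(1) assms(3) by (intro frac_le) (auto simp: J_def)
    also have "\<dots> = 2 ^ (lv i + 1) / 2 ^ J"
      using assms(3) \<open>J \<noteq> 0\<close> by (cases J) (simp_all add: field_simps)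
    finally have "(s i / sum s R) powr (1/3) \<le> (2 ^ (lv i + 1) / 2 ^ J) powr (1/3)"
      using s_pos \<open>sum s R > 0\<close> that by (intro powr_mono2) (auto intro: less_imp_le)
    also have "\<dots> = x ^ (lv i + 1) / x ^ J"
      by (simp only: powr_divide pow_x)
    finally show "(s i / sum s R) powr (1/3) \<le> x ^ (lv i + 1) / x ^ J" .
  qed
  then have "(\<Sum>i\<in>R. (s i / sum s R) powr (1/3)) \<le> k * (x ^ 2 / (x - 1))"
    using assms(1) card_level by (intro sum_le_geometric_levels) (auto simp: x_def)
  also have "\<dots> \<le> real k * 8"
    using cube_root_two_bound by (intro mult_left_mono) (auto simp: x_def)
  finally show ?thesis by simp
qed

lemma smin_pos:
  assumes "n \<ge> 1" and "\<forall>i\<in>{1..n}. s i > 0"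
  shows "smin s n > 0"
proof -
  have "smin s n \<in> s ` {1..n}" unfolding smin_def using assms(1) by (intro Min_in) auto
  then show ?thesis using assms(2) by auto
qed

lemma grp_memD:
  assumes "i \<in> grp s n j" and "smin s n > 0"
  shows "i \<in> {1..n}" and "2 ^ (j - 1) * smin s n \<le> s i" and "s i < 2 ^ j * smin s n"
  using assms by (auto simp: grp_def field_simps)

lemma reduced_sets_levels:
  assumes "R \<in> reduced_sets s n m" and "smin s n > 0"
  obtains lv :: "nat \<Rightarrow> nat" where "R \<subseteq> {1..n}"
    and "\<forall>i\<in>R. 2 ^ (lv i - 1) * smin s n \<le> s i \<and> s i < 2 ^ lv i * smin s n"
    and "\<forall>j. card {i\<in>R. lv i = j} \<le> 2 * m"
proof -
  obtain Gp where R: "R = (\<Union>j\<in>{1..}. Gp j)" and adm: "admissible_choice s n m Gp"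
    using assms(1) unfolding reduced_sets_def by blast
  have Gp_sub: "Gp j \<subseteq> grp s n j" and Gp_card: "card (Gp j) \<le> 2 * m" if "j \<ge> 1" for j
    using adm that unfolding admissible_choice_def by (metis linorder_not_le order_refl)+
  define lv where "lv i = (SOME j. j \<ge> 1 \<and> i \<in> Gp j)" for i
  have lv: "lv i \<ge> 1 \<and> i \<in> Gp (lv i)" if "i \<in> R" for i
  proof -
    have "\<exists>j. j \<ge> 1 \<and> i \<in> Gp j" using that R by auto
    then show ?thesis unfolding lv_def by (rule someI_ex)
  qed
  then have lv_grp: "i \<in> grp s n (lv i)" if "i \<in> R" for i
    using that Gp_sub by blast
  have "card {i\<in>R. lv i = j} \<le> 2 * m" for j
  proof (cases "j \<ge> 1")
    case True
    have "{i\<in>R. lv i = j} \<subseteq> Gp j" using lv by auto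
    moreover have "finite (Gp j)" using Gp_sub[OF True] by (rule finite_subset) (simp add: grp_def)
    ultimately show ?thesis using Gp_card[OF True] by (meson card_mono le_trans)
  next
    case False
    then have "{i\<in>R. lv i = j} = {}" using lv by auto
    then show ?thesis by (simp only: card.empty zero_le)
  qed
  moreover have "R \<subseteq> {1..n}" using lv_grp grp_memD(1)[OF _ assms(2)] by blast
  ultimately show thesis using that lv_grp grp_memD(2,3)[OF _ assms(2)] by blast
qed

theorem lemma1:
  fixes s :: "nat \<Rightarrow> real" and n m :: nat and R :: "nat set"
  assumes "n \<ge> 1" and "m \<ge> 2"
    and "\<forall>i\<in>{1..n}. s i > 0"
    and "R \<in> reduced_sets s n m"
    and "\<forall>R'\<in>reduced_sets s n m. Ent s R' \<le> Ent s R"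
  shows "Ent s R \<le> 8 * ln (real m)"
proof -
  have "smin s n > 0" using assms(1,3) by (rule smin_pos)
  then obtain lv where R_sub: "R \<subseteq> {1..n}"
    and level: "\<forall>i\<in>R. 2 ^ (lv i - 1) * smin s n \<le> s i \<and> s i < 2 ^ lv i * smin s n"
    and card_level: "\<forall>j. card {i\<in>R. lv i = j} \<le> 2 * m"
    by (rule reduced_sets_levels[OF assms(4)])
  have "finite R" using R_sub finite_subset by blast
  have s_pos: "\<forall>i\<in>R. s i > 0" using R_sub assms(3) by auto
  show ?thesis
  proof (cases "R = {}")
    case True
    then show ?thesis using assms(2) by (simp add: Ent_def)
  next
    case False
    define V where "V = (\<Sum>i\<in>R. (s i / sum s R) powr (1/3))"
    have "sum s R > 0" using \<open>finite R\<close> False s_pos by (intro sum_pos) auto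
    then have "V > 0" unfolding V_def using \<open>finite R\<close> False s_pos by (intro sum_pos) auto
    have "V \<le> 16 * real m"
      using sum_cube_root_shares_le_dyadic[OF \<open>finite R\<close> False \<open>smin s n > 0\<close> level card_level]
      by (simp add: V_def)
    have "(2/3) * Ent s R \<le> ln V"
      using entropy_le_Renyi[OF \<open>finite R\<close> False s_pos, of "1/3"] by (simp add: V_def)
    also have "\<dots> \<le> ln (16 * real m)" using \<open>V > 0\<close> \<open>V \<le> 16 * real m\<close> by simp
    also have "\<dots> = ln 16 + ln (real m)" using assms(2) by (simp add: ln_mult)
    finally have "(2/3) * Ent s R \<le> ln 16 + ln (real m)" .
    moreover have "ln (16::real) = 4 * ln 2" using ln_realpow[of 2 4] by simp
    moreover have "0 < ln (2::real)" and "ln 2 \<le> ln (real m)" using assms(2) by simp_all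
    ultimately show ?thesis by linarith
  qed
qed

end
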